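(* Let $R$ be a commutative ring with unity in which every zero divisor is harmless. If $r\in R$ is a non-zero F-irreducible element, then $r$ is B-irreducible.
   Context: A zero divisor $r$ of $R$ is called harmless if there exists a unit $u\in R$ with $r=1-u$. A non-zero, non-unit element $r\in R$ is called B-irreducible if the principal ideal $(r)$ is a maximal element, with respect to inclusion, of the set of all proper principal ideals of $R$. A factorization of $r$ is an expression $r=a_1\cdots a_n$ with $a_i\in R$; a refinement of this factorization is a factorization obtained by replacing one or more of the factors $a_i$ by a factorization of $a_i$. A non-unit element $r\in R$ is called F-irreducible if every factorization of $r$ has a refinement in which $r$ appears as one of the new factors. *)

theory Defs
  imports Main
begin

definition zero_divisor :: "'a::comm_ring_1 \<Rightarrow> bool" where
  "zero_divisor r \<longleftrightarrow> (\<exists>s. s \<noteq> 0 \<and> r * s = 0)"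

definition harmless :: "'a::comm_ring_1 \<Rightarrow> bool" where
  "harmless r \<longleftrightarrow> zero_divisor r \<and> (\<exists>u. u dvd 1 \<and> r = 1 - u)"

definition pideal :: "'a::comm_ring_1 \<Rightarrow> 'a set" where
  "pideal a = {a * x | x. True}"

definition B_irreducible :: "'a::comm_ring_1 \<Rightarrow> bool" where
  "B_irreducible r \<longleftrightarrow> r \<noteq> 0 \<and> \<not> r dvd 1 \<and> pideal r \<noteq> UNIV \<and>
     (\<forall>a. pideal a \<noteq> UNIV \<and> pideal r \<subseteq> pideal a \<longrightarrow> pideal a = pideal r)"

text \<open>A refinement of the factorization as: each factor as!i is replaced by a
  factorization bs!i of it (a one-element list means the factor is kept).\<close>
definition is_refinement :: "'a::comm_ring_1 list list \<Rightarrow> 'a list \<Rightarrow> bool" where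
  "is_refinement bs as \<longleftrightarrow> length bs = length as \<and>
     (\<forall>i < length as. prod_list (bs ! i) = as ! i)"

definition F_irreducible :: "'a::comm_ring_1 \<Rightarrow> bool" where
  "F_irreducible r \<longleftrightarrow> \<not> r dvd 1 \<and>
     (\<forall>as. prod_list as = r \<longrightarrow>
        (\<exists>bs. is_refinement bs as \<and> (\<exists>i < length bs. r \<in> set (bs ! i))))"

end

theory Submission
  imports Defs
begin

text \<open>If \<open>(r) \<subseteq> (a)\<close> with \<open>(a)\<close> proper, write \<open>r = a x\<close>.
  F-irreducibility forces \<open>r\<close> to divide \<open>a\<close> or \<open>x\<close>. In the first case \<open>(a) = (r)\<close>.
  In the second, \<open>x = r y\<close> gives \<open>(1 - a y) r = 0\<close>, so \<open>1 - a y\<close> is a zero divisor;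
  being harmless, \<open>a y\<close> is a unit, contradicting that \<open>(a)\<close> is proper.\<close>

lemma pideal_eq_dvd: "pideal a = {y. a dvd y}"
  unfolding pideal_def by (auto simp: dvd_def mult.commute)

lemma pideal_eq_UNIV_iff: "pideal a = UNIV \<longleftrightarrow> a dvd 1"
  unfolding pideal_eq_dvd by (auto intro: dvd_trans)

lemma pideal_subset_iff: "pideal b \<subseteq> pideal a \<longleftrightarrow> a dvd b"
  unfolding pideal_eq_dvd by (auto intro: dvd_trans dest: subsetD[of _ _ b])

lemma pideal_eq_iff: "pideal a = pideal b \<longleftrightarrow> a dvd b \<and> b dvd a"
  by (auto simp: set_eq_subset pideal_subset_iff)

lemma dvd_prod_list_of_mem: "(x::'a::comm_monoid_mult) \<in> set xs \<Longrightarrow> x dvd prod_list xs"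
  by (induction xs) auto

lemma F_irreducible_dvd_factor:
  assumes "F_irreducible r" and "prod_list as = r"
  shows "\<exists>a \<in> set as. r dvd a"
proof -
  obtain bs i where "is_refinement bs as" "i < length bs" "r \<in> set (bs ! i)"
    using assms unfolding F_irreducible_def by blast
  then have "i < length as" "prod_list (bs ! i) = as ! i"
    unfolding is_refinement_def by auto
  moreover have "r dvd prod_list (bs ! i)"
    using \<open>r \<in> set (bs ! i)\<close> by (rule dvd_prod_list_of_mem)
  ultimately show ?thesis by (metis nth_mem)
qed

lemma F_irreducible_dvd_mult:
  assumes "F_irreducible r" and "r = a * b"
  shows "r dvd a \<or> r dvd b"
  using F_irreducible_dvd_factor[OF assms(1), of "[a, b]"] assms(2) by auto

lemma unit_if_harmless_annihilator:
  fixes c r :: "'a::comm_ring_1"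
  assumes "\<forall>z::'a. zero_divisor z \<longrightarrow> harmless z"
    and "r \<noteq> 0" and "(1 - c) * r = 0"
  shows "c dvd 1"
proof -
  have "zero_divisor (1 - c)"
    unfolding zero_divisor_def using assms(2,3) by blast
  then obtain u where "u dvd 1" "1 - c = 1 - u"
    using assms(1) unfolding harmless_def by blast
  then show ?thesis by simp
qed

theorem mainTheorem4:
  fixes r :: "'a::comm_ring_1"
  assumes "\<forall>z::'a. zero_divisor z \<longrightarrow> harmless z"
    and "r \<noteq> 0"
    and "F_irreducible r"
  shows "B_irreducible r"
proof -
  have maximal: "r dvd a" if "\<not> a dvd 1" and "a dvd r" for a
  proof -
    obtain x where rx: "r = a * x" using \<open>a dvd r\<close> by blast
    show ?thesis
      using F_irreducible_dvd_mult[OF assms(3) rx]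
    proof
      assume "r dvd x"
      then obtain y where "x = r * y" by blast
      with rx have "(1 - a * y) * r = 0" by (simp add: algebra_simps)
      then have "a * y dvd 1" using unit_if_harmless_annihilator assms(1,2) by blast
      with \<open>\<not> a dvd 1\<close> show ?thesis using dvd_mult_left by blast
    qed
  qed
  have "\<not> r dvd 1" using assms(3) unfolding F_irreducible_def by blast
  then show ?thesis
    unfolding B_irreducible_def using assms(2) maximal
    by (auto simp: pideal_eq_UNIV_iff pideal_subset_iff pideal_eq_iff)
qed

end
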